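(* Let $\Phi:\{0,1\}^\omega\to\{0,1\}^\omega$ be a computable function and let $b$ be a $\Phi$-martingale. Suppose that for every $\sigma\in\{0,1\}^{<\omega}$ the limit $$b'(\sigma)=\lim_{n\to\infty}\sum_{\tau\in\{0,1\}^n} b(\tau)\,\frac{\mu([\sigma]\cap\Phi^{-1}([\tau]))}{\mu([\sigma])}$$ exists. Then $b'$ is a martingale, i.e. $b'(\sigma0)+b'(\sigma1)=2b'(\sigma)$ for all $\sigma$. Furthermore, if $b$ satisfies the saving property, then $\Phi^{-1}(\mathrm{Succ}(b))\subseteq \mathrm{Succ}(b')$.
   Context: $\mu$ is the uniform (fair-coin) measure on $\{0,1\}^\omega$ and $[\tau]$ is the set of sequences extending $\tau$. For a computable (total) $\Phi:\{0,1\}^\omega\to\{0,1\}^\omega$, a $\Phi$-martingale is a function $b:\{0,1\}^{<\omega}\to\mathbb{R}_{\ge0}$ with $b(\tau)\mu(\Phi^{-1}[\tau])=b(\tau0)\mu(\Phi^{-1}[\tau0])+b(\tau1)\mu(\Phi^{-1}[\tau1])$ for all $\tau$. $\mathrm{Succ}(b)=\{Y:\limsup_n b(Y\upharpoonright n)=\infty\}$ (for a function on strings in general). $b$ has the saving property if for every $k\in\omega$ and every $Y\in\mathrm{Succ}(b)$ there is a finite proper prefix $\tau$ of $Y$ such that $b(\rho)\ge k$ for every string $\rho$ extending $\tau$. *)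

theory Defs
  imports "HOL-Probability.Probability"
begin

definition cantor_mu :: "(nat \<Rightarrow> bool) measure" where
  "cantor_mu = PiM UNIV (\<lambda>_. measure_pmf (bernoulli_pmf (1/2)))"

definition cyl :: "bool list \<Rightarrow> (nat \<Rightarrow> bool) set" where
  "cyl \<sigma> = {X. \<forall>i<length \<sigma>. X i = \<sigma> ! i}"

definition pref :: "(nat \<Rightarrow> bool) \<Rightarrow> nat \<Rightarrow> bool list" where
  "pref X n = map X [0..<n]"

text \<open>Continuity of a map on Cantor space (every total computable map is continuous).\<close>
definition cantor_continuous :: "((nat \<Rightarrow> bool) \<Rightarrow> (nat \<Rightarrow> bool)) \<Rightarrow> bool" where
  "cantor_continuous \<Phi> \<longleftrightarrow>
     (\<forall>X n. \<exists>m. \<forall>Y. (\<forall>i<m. Y i = X i) \<longrightarrow> (\<forall>i<n. \<Phi> Y i = \<Phi> X i))"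

definition Phi_martingale ::
  "((nat \<Rightarrow> bool) \<Rightarrow> (nat \<Rightarrow> bool)) \<Rightarrow> (bool list \<Rightarrow> real) \<Rightarrow> bool" where
  "Phi_martingale \<Phi> b \<longleftrightarrow>
     (\<forall>\<tau>. b \<tau> \<ge> 0) \<and>
     (\<forall>\<tau>. b \<tau> * measure cantor_mu (\<Phi> -` cyl \<tau>)
          = b (\<tau> @ [False]) * measure cantor_mu (\<Phi> -` cyl (\<tau> @ [False]))
          + b (\<tau> @ [True]) * measure cantor_mu (\<Phi> -` cyl (\<tau> @ [True])))"

definition Succ :: "(bool list \<Rightarrow> real) \<Rightarrow> (nat \<Rightarrow> bool) set" where
  "Succ f = {Y. limsup (\<lambda>n. ereal (f (pref Y n))) = \<infinity>}"

definition saving_property :: "(bool list \<Rightarrow> real) \<Rightarrow> bool" where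
  "saving_property b \<longleftrightarrow>
     (\<forall>k::nat. \<forall>Y\<in>Succ b. \<exists>n. \<forall>\<rho>. (\<exists>\<rho>'. \<rho> = pref Y n @ \<rho>') \<longrightarrow> b \<rho> \<ge> real k)"

definition bprime_seq ::
  "((nat \<Rightarrow> bool) \<Rightarrow> (nat \<Rightarrow> bool)) \<Rightarrow> (bool list \<Rightarrow> real) \<Rightarrow> bool list \<Rightarrow> nat \<Rightarrow> real" where
  "bprime_seq \<Phi> b \<sigma> n =
     (\<Sum>\<tau>\<in>{\<tau>::bool list. length \<tau> = n}.
        b \<tau> * measure cantor_mu (cyl \<sigma> \<inter> \<Phi> -` cyl \<tau>) / measure cantor_mu (cyl \<sigma>))"

definition bprime ::
  "((nat \<Rightarrow> bool) \<Rightarrow> (nat \<Rightarrow> bool)) \<Rightarrow> (bool list \<Rightarrow> real) \<Rightarrow> bool list \<Rightarrow> real" where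
  "bprime \<Phi> b \<sigma> = lim (bprime_seq \<Phi> b \<sigma>)"

end

theory Submission imports Defs begin

text \<open>Splitting every cylinder [\<sigma>] into [\<sigma>0] and [\<sigma>1] splits each weight
  \<open>\<mu>([\<sigma>] \<inter> \<Phi>\<^sup>-\<^sup>1[\<tau>])\<close> of the n-th approximant accordingly, so each approximant, and hence the
  limit b', satisfies the martingale identity. For the success set: continuity of \<open>\<Phi>\<close> makes
  the sets \<open>\<Phi>\<^sup>-\<^sup>1[\<tau>]\<close> measurable and forces \<open>\<Phi>\<close> to map a long enough prefix [X\<restriction>m] into
  [\<Phi>(X)\<restriction>n]; by the saving property b \<ge> k on all extensions of \<open>\<Phi>(X)\<restriction>n\<close>, and for N \<ge> n the
  N-th approximant of b'(X\<restriction>m) is an average of such values, hence \<ge> k.\<close>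

interpretation cantor: product_prob_space "\<lambda>_::nat. measure_pmf (bernoulli_pmf (1/2))" UNIV
  by unfold_locales

lemma prob_space_cantor_mu: "prob_space cantor_mu"
  unfolding cantor_mu_def by (rule cantor.P.prob_space_axioms)

interpretation cantor_mu: prob_space cantor_mu
  by (rule prob_space_cantor_mu)

lemma cyl_eq_prod_emb:
  "cyl \<sigma> = prod_emb UNIV (\<lambda>_::nat. measure_pmf (bernoulli_pmf (1/2))) {..<length \<sigma>}
             (Pi\<^sub>E {..<length \<sigma>} (\<lambda>i. {\<sigma>!i}))"
  by (rule set_eqI) (simp add: cyl_def prod_emb_iff PiE_iff extensional_def Ball_def)

lemma sets_cyl [measurable]: "cyl \<sigma> \<in> sets cantor_mu"
  unfolding cyl_eq_prod_emb cantor_mu_def by (rule sets_PiM_I) auto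

lemma measure_cyl: "measure cantor_mu (cyl \<sigma>) = (1/2) ^ length \<sigma>"
proof -
  have "measure cantor_mu (cyl \<sigma>)
      = (\<Prod>i<length \<sigma>. measure (measure_pmf (bernoulli_pmf (1/2))) {\<sigma>!i})"
    unfolding cyl_eq_prod_emb cantor_mu_def by (rule cantor.measure_PiM_emb) auto
  also have "\<dots> = (\<Prod>i<length \<sigma>. 1/2)"
    by (intro prod.cong refl) (auto simp: measure_pmf_single split: bool.split)
  finally show ?thesis by simp
qed

lemma cyl_pref: "cyl (pref X m) = {Y. \<forall>i<m. Y i = X i}"
  by (auto simp: cyl_def pref_def)

lemma cyl_append_Un: "cyl \<sigma> = cyl (\<sigma> @ [False]) \<union> cyl (\<sigma> @ [True])"
proof (rule set_eqI)
  fix X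
  show "X \<in> cyl \<sigma> \<longleftrightarrow> X \<in> cyl (\<sigma> @ [False]) \<union> cyl (\<sigma> @ [True])"
    unfolding cyl_def by (cases "X (length \<sigma>)") (auto simp: nth_append less_Suc_eq)
qed

lemma eq_of_mem_cyl_same_length:
  assumes "X \<in> cyl \<sigma>" "X \<in> cyl \<tau>" "length \<sigma> = length \<tau>"
  shows "\<sigma> = \<tau>"
  using assms unfolding cyl_def by (auto intro!: nth_equalityI)

lemma cyl_append_disjoint: "cyl (\<sigma> @ [False]) \<inter> cyl (\<sigma> @ [True]) = {}"
  using eq_of_mem_cyl_same_length[of _ "\<sigma> @ [False]" "\<sigma> @ [True]"] by auto

lemma take_eq_pref_of_mem_cyl:
  assumes "n \<le> length \<tau>" "Z \<in> cyl \<tau>" "\<forall>i<n. Z i = W i"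
  shows "take n \<tau> = pref W n"
  using assms by (intro nth_equalityI) (auto simp: pref_def cyl_def)

lemma vimage_cyl_eq_UN_cyl:
  assumes "cantor_continuous \<Phi>"
  shows "\<Phi> -` cyl \<tau> = (\<Union>\<sigma>\<in>{\<sigma>. cyl \<sigma> \<subseteq> \<Phi> -` cyl \<tau>}. cyl \<sigma>)"
proof (rule equalityI[OF subsetI])
  fix X assume X: "X \<in> \<Phi> -` cyl \<tau>"
  obtain m where m: "\<And>Y. \<forall>i<m. Y i = X i \<Longrightarrow> \<forall>i<length \<tau>. \<Phi> Y i = \<Phi> X i"
    using assms unfolding cantor_continuous_def by blast
  have "cyl (pref X m) \<subseteq> \<Phi> -` cyl \<tau>"
  proof
    fix Y assume "Y \<in> cyl (pref X m)"
    then have "\<forall>i<length \<tau>. \<Phi> Y i = \<Phi> X i" by (intro m) (simp add: cyl_pref)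
    with X show "Y \<in> \<Phi> -` cyl \<tau>" by (simp add: cyl_def)
  qed
  moreover have "X \<in> cyl (pref X m)" by (simp add: cyl_pref)
  ultimately show "X \<in> (\<Union>\<sigma>\<in>{\<sigma>. cyl \<sigma> \<subseteq> \<Phi> -` cyl \<tau>}. cyl \<sigma>)" by blast
qed blast

lemma sets_vimage_cyl:
  assumes "cantor_continuous \<Phi>"
  shows "\<Phi> -` cyl \<tau> \<in> sets cantor_mu"
proof -
  have "(\<Union>\<sigma>\<in>{\<sigma>. cyl \<sigma> \<subseteq> \<Phi> -` cyl \<tau>}. cyl \<sigma>) \<in> sets cantor_mu"
    by (rule sets.countable_UN) (use sets_cyl in blast)
  then show ?thesis by (simp only: vimage_cyl_eq_UN_cyl[OF assms, symmetric])
qed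

lemma measure_cyl_Int_append:
  assumes "A \<in> sets cantor_mu"
  shows "measure cantor_mu (cyl \<sigma> \<inter> A)
       = measure cantor_mu (cyl (\<sigma> @ [False]) \<inter> A) + measure cantor_mu (cyl (\<sigma> @ [True]) \<inter> A)"
proof -
  have "cyl \<sigma> \<inter> A = (cyl (\<sigma> @ [False]) \<inter> A) \<union> (cyl (\<sigma> @ [True]) \<inter> A)"
    using cyl_append_Un[of \<sigma>] by blast
  moreover have "(cyl (\<sigma> @ [False]) \<inter> A) \<inter> (cyl (\<sigma> @ [True]) \<inter> A) = {}"
    using cyl_append_disjoint[of \<sigma>] by blast
  ultimately show ?thesis
    using assms by (simp add: cantor_mu.finite_measure_Union)
qed

lemma sum_measure_Int_vimage_cyl:
  assumes "cantor_continuous \<Phi>" "S \<in> sets cantor_mu"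
  shows "(\<Sum>\<tau>\<in>{\<tau>. length \<tau> = N}. measure cantor_mu (S \<inter> \<Phi> -` cyl \<tau>)) = measure cantor_mu S"
proof -
  have "(\<Union>\<tau>\<in>{\<tau>. length \<tau> = N}. S \<inter> \<Phi> -` cyl \<tau>) = S"
  proof (intro equalityI subsetI)
    fix Y assume "Y \<in> S"
    moreover have "\<Phi> Y \<in> cyl (pref (\<Phi> Y) N)" by (simp add: cyl_pref)
    moreover have "length (pref (\<Phi> Y) N) = N" by (simp add: pref_def)
    ultimately show "Y \<in> (\<Union>\<tau>\<in>{\<tau>. length \<tau> = N}. S \<inter> \<Phi> -` cyl \<tau>)" by blast
  qed blast
  moreover have "measure cantor_mu (\<Union>\<tau>\<in>{\<tau>. length \<tau> = N}. S \<inter> \<Phi> -` cyl \<tau>)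
      = (\<Sum>\<tau>\<in>{\<tau>. length \<tau> = N}. measure cantor_mu (S \<inter> \<Phi> -` cyl \<tau>))"
  proof (rule cantor_mu.finite_measure_finite_Union)
    show "finite {\<tau>::bool list. length \<tau> = N}"
      using finite_lists_length_eq[of "UNIV::bool set" N] by simp
    show "(\<lambda>\<tau>. S \<inter> \<Phi> -` cyl \<tau>) ` {\<tau>. length \<tau> = N} \<subseteq> sets cantor_mu"
      using assms sets_vimage_cyl by blast
    show "disjoint_family_on (\<lambda>\<tau>. S \<inter> \<Phi> -` cyl \<tau>) {\<tau>. length \<tau> = N}"
      unfolding disjoint_family_on_def using eq_of_mem_cyl_same_length by blast
  qed
  ultimately show ?thesis by simp
qed

lemma bprime_seq_append:
  assumes "cantor_continuous \<Phi>"
  shows "bprime_seq \<Phi> b (\<sigma> @ [False]) n + bprime_seq \<Phi> b (\<sigma> @ [True]) n = 2 * bprime_seq \<Phi> b \<sigma> n"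
proof -
  define h :: real where "h = (1/2) ^ length \<sigma>"
  have "h > 0" by (simp add: h_def)
  have term_split:
    "b \<tau> * measure cantor_mu (cyl (\<sigma> @ [False]) \<inter> \<Phi> -` cyl \<tau>) / (h/2)
     + b \<tau> * measure cantor_mu (cyl (\<sigma> @ [True]) \<inter> \<Phi> -` cyl \<tau>) / (h/2)
     = 2 * (b \<tau> * measure cantor_mu (cyl \<sigma> \<inter> \<Phi> -` cyl \<tau>) / h)" for \<tau>
    using measure_cyl_Int_append[OF sets_vimage_cyl[OF assms], of \<sigma> \<tau>] \<open>h > 0\<close>
    by (simp add: field_simps)
  have measure_children: "measure cantor_mu (cyl (\<sigma> @ [c])) = h/2" for c
    by (simp add: measure_cyl h_def)
  have "measure cantor_mu (cyl \<sigma>) = h"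
    by (simp add: measure_cyl h_def)
  then show ?thesis
    unfolding bprime_seq_def measure_children sum.distrib[symmetric] sum_distrib_left
    by (simp only: term_split)
qed

lemma bprime_seq_ge:
  assumes "cantor_continuous \<Phi>"
    and "\<And>\<tau>. length \<tau> = N \<Longrightarrow> cyl \<sigma> \<inter> \<Phi> -` cyl \<tau> \<noteq> {} \<Longrightarrow> k \<le> b \<tau>"
  shows "k \<le> bprime_seq \<Phi> b \<sigma> N"
proof -
  define h where "h = measure cantor_mu (cyl \<sigma>)"
  have "h > 0" by (simp add: h_def measure_cyl)
  have "k = (\<Sum>\<tau>\<in>{\<tau>. length \<tau> = N}. k * measure cantor_mu (cyl \<sigma> \<inter> \<Phi> -` cyl \<tau>) / h)"
    using \<open>h > 0\<close> sum_measure_Int_vimage_cyl[OF assms(1) sets_cyl[of \<sigma>], of N]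
    by (simp add: sum_distrib_left[symmetric] sum_divide_distrib[symmetric] h_def)
  also have "\<dots> \<le> bprime_seq \<Phi> b \<sigma> N"
    unfolding bprime_seq_def h_def[symmetric]
  proof (rule sum_mono)
    fix \<tau> :: "bool list" assume "\<tau> \<in> {\<tau>. length \<tau> = N}"
    then show "k * measure cantor_mu (cyl \<sigma> \<inter> \<Phi> -` cyl \<tau>) / h
             \<le> b \<tau> * measure cantor_mu (cyl \<sigma> \<inter> \<Phi> -` cyl \<tau>) / h"
      using assms(2)[of \<tau>] \<open>h > 0\<close>
      by (cases "cyl \<sigma> \<inter> \<Phi> -` cyl \<tau> = {}")
         (auto intro!: divide_right_mono mult_right_mono)
  qed
  finally show ?thesis .
qed

lemma bprime_append:
  assumes "cantor_continuous \<Phi>" "\<forall>\<sigma>. convergent (bprime_seq \<Phi> b \<sigma>)"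
  shows "bprime \<Phi> b (\<sigma> @ [False]) + bprime \<Phi> b (\<sigma> @ [True]) = 2 * bprime \<Phi> b \<sigma>"
proof (rule LIMSEQ_unique)
  have lim: "bprime_seq \<Phi> b \<rho> \<longlonglongrightarrow> bprime \<Phi> b \<rho>" for \<rho>
    using assms(2) unfolding bprime_def convergent_LIMSEQ_iff by blast
  show "(\<lambda>n. bprime_seq \<Phi> b (\<sigma> @ [False]) n + bprime_seq \<Phi> b (\<sigma> @ [True]) n)
        \<longlonglongrightarrow> bprime \<Phi> b (\<sigma> @ [False]) + bprime \<Phi> b (\<sigma> @ [True])"
    by (intro tendsto_add lim)
  show "(\<lambda>n. bprime_seq \<Phi> b (\<sigma> @ [False]) n + bprime_seq \<Phi> b (\<sigma> @ [True]) n)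
        \<longlonglongrightarrow> 2 * bprime \<Phi> b \<sigma>"
    unfolding bprime_seq_append[OF assms(1)] by (intro tendsto_mult_left lim)
qed

lemma bprime_pref_eventually_ge:
  assumes "cantor_continuous \<Phi>" "\<forall>\<sigma>. convergent (bprime_seq \<Phi> b \<sigma>)"
    and "saving_property b" "\<Phi> X \<in> Succ b"
  shows "\<forall>\<^sub>F m in sequentially. real k \<le> bprime \<Phi> b (pref X m)"
proof -
  obtain n where saving: "\<And>\<rho>'. real k \<le> b (pref (\<Phi> X) n @ \<rho>')"
    using assms(3,4) unfolding saving_property_def by blast
  obtain m where cont: "\<And>Y. \<forall>i<m. Y i = X i \<Longrightarrow> \<forall>i<n. \<Phi> Y i = \<Phi> X i"
    using assms(1) unfolding cantor_continuous_def by blast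
  have "real k \<le> bprime \<Phi> b (pref X m')" if "m \<le> m'" for m'
  proof (rule LIMSEQ_le_const)
    show "bprime_seq \<Phi> b (pref X m') \<longlonglongrightarrow> bprime \<Phi> b (pref X m')"
      using assms(2) unfolding bprime_def convergent_LIMSEQ_iff by blast
    have "real k \<le> bprime_seq \<Phi> b (pref X m') N" if "n \<le> N" for N
    proof (rule bprime_seq_ge[OF assms(1)])
      fix \<tau> :: "bool list"
      assume "length \<tau> = N" "cyl (pref X m') \<inter> \<Phi> -` cyl \<tau> \<noteq> {}"
      then obtain Y where "Y \<in> cyl (pref X m')" "\<Phi> Y \<in> cyl \<tau>" by blast
      with \<open>m \<le> m'\<close> have "\<forall>i<n. \<Phi> Y i = \<Phi> X i"
        by (intro cont) (simp add: cyl_pref)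
      then have "take n \<tau> = pref (\<Phi> X) n"
        using take_eq_pref_of_mem_cyl \<open>length \<tau> = N\<close> \<open>n \<le> N\<close> \<open>\<Phi> Y \<in> cyl \<tau>\<close> by blast
      then show "real k \<le> b \<tau>"
        using saving[of "drop n \<tau>"] by (metis append_take_drop_id)
    qed
    then show "\<exists>N. \<forall>N'\<ge>N. real k \<le> bprime_seq \<Phi> b (pref X m') N'" by blast
  qed
  then show ?thesis by (rule eventually_sequentiallyI)
qed

lemma vimage_Succ_subset_Succ_bprime:
  assumes "cantor_continuous \<Phi>" "\<forall>\<sigma>. convergent (bprime_seq \<Phi> b \<sigma>)" "saving_property b"
  shows "\<Phi> -` Succ b \<subseteq> Succ (bprime \<Phi> b)"
proof
  fix X assume "X \<in> \<Phi> -` Succ b"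
  have "((\<lambda>m. ereal (bprime \<Phi> b (pref X m))) \<longlongrightarrow> \<infinity>) sequentially"
    unfolding tendsto_PInfty
  proof
    fix r :: real
    obtain k :: nat where "r < real k" using reals_Archimedean2 by blast
    with bprime_pref_eventually_ge[OF assms, of X k] \<open>X \<in> \<Phi> -` Succ b\<close>
    show "\<forall>\<^sub>F m in sequentially. ereal r < ereal (bprime \<Phi> b (pref X m))"
      by (auto elim: eventually_mono)
  qed
  then have "limsup (\<lambda>m. ereal (bprime \<Phi> b (pref X m))) = \<infinity>"
    by (intro lim_imp_Limsup) simp_all
  then show "X \<in> Succ (bprime \<Phi> b)" by (simp add: Succ_def)
qed

theorem lemmaL2:
  fixes \<Phi> :: "(nat \<Rightarrow> bool) \<Rightarrow> (nat \<Rightarrow> bool)" and b :: "bool list \<Rightarrow> real"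
  assumes "cantor_continuous \<Phi>"
    and "Phi_martingale \<Phi> b"
    and "\<forall>\<sigma>. convergent (bprime_seq \<Phi> b \<sigma>)"
  shows "(\<forall>\<sigma>. bprime \<Phi> b (\<sigma> @ [False]) + bprime \<Phi> b (\<sigma> @ [True]) = 2 * bprime \<Phi> b \<sigma>)
       \<and> (saving_property b \<longrightarrow> \<Phi> -` Succ b \<subseteq> Succ (bprime \<Phi> b))"
  using bprime_append[OF assms(1,3)] vimage_Succ_subset_Succ_bprime[OF assms(1,3)] by blast

end
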